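(* Let $K$ be a field, $S=K[x_1,\ldots,x_n]$ with $\mathfrak{m}=(x_1,\ldots,x_n)$, and let $I\subseteq S$ be a monomial ideal generated in degree $d$. Suppose that for every positive integer $m$ and every monomial $u\in(I^m:\mathfrak{m})\setminus I^m$ one has $\deg(u)=md-1$. Then $\mathrm{Soc}(I)$ is isomorphic, as an $\mathcal{F}(I)$-module, to an ideal of $\mathcal{F}(I)$. In particular, if $\mathrm{Soc}(I)\neq0$, then $\mathrm{rank}\,\mathrm{Soc}(I)=1$.
   Context: $\mathcal{F}(I)=\bigoplus_{m\ge0}I^m/\mathfrak{m}I^m$ is the fiber cone of $I$ and $\mathrm{Soc}(I)=\bigoplus_{m\ge0}(I^m:\mathfrak{m})/I^m$, a graded $\mathcal{F}(I)$-module via multiplication. *)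

theory Defs
  imports "HOL-Library.Poly_Mapping" "HOL-Algebra.Algebra"
begin

type_synonym ('v, 'k) mpoly = "('v \<Rightarrow>\<^sub>0 nat) \<Rightarrow>\<^sub>0 'k"

definition monom :: "('v \<Rightarrow>\<^sub>0 nat) \<Rightarrow> ('v, 'k::field) mpoly" where
  "monom a = Poly_Mapping.single a 1"

definition mdeg :: "('v \<Rightarrow>\<^sub>0 nat) \<Rightarrow> nat" where
  "mdeg a = (\<Sum>v\<in>Poly_Mapping.keys a. Poly_Mapping.lookup a v)"

definition is_ideal :: "'a::comm_ring_1 set \<Rightarrow> bool" where
  "is_ideal J \<longleftrightarrow> 0 \<in> J \<and> (\<forall>x\<in>J. \<forall>y\<in>J. x + y \<in> J) \<and> (\<forall>r. \<forall>x\<in>J. r * x \<in> J)"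

definition ideal_gen :: "'a::comm_ring_1 set \<Rightarrow> 'a set" where
  "ideal_gen G = \<Inter>{J. G \<subseteq> J \<and> is_ideal J}"

definition ideal_prod :: "'a::comm_ring_1 set \<Rightarrow> 'a set \<Rightarrow> 'a set" where
  "ideal_prod A B = ideal_gen ((\<lambda>(a, b). a * b) ` (A \<times> B))"

fun ideal_pow :: "'a::comm_ring_1 set \<Rightarrow> nat \<Rightarrow> 'a set" where
  "ideal_pow A 0 = UNIV"
| "ideal_pow A (Suc m) = ideal_prod A (ideal_pow A m)"

definition ideal_colon :: "'a::comm_ring_1 set \<Rightarrow> 'a set \<Rightarrow> 'a set" where
  "ideal_colon A B = {f. \<forall>b\<in>B. f * b \<in> A}"

definition max_ideal :: "('v, 'k::field) mpoly set" where
  "max_ideal = ideal_gen (range (\<lambda>v. monom (Poly_Mapping.single v 1)))"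

definition monomial_ideal_gen_in_degree :: "('v, 'k::field) mpoly set \<Rightarrow> nat \<Rightarrow> bool" where
  "monomial_ideal_gen_in_degree I d \<longleftrightarrow>
     (\<exists>G. (\<forall>a\<in>G. mdeg a = d) \<and> I = ideal_gen (monom ` G))"

definition pcoset :: "'a::comm_ring_1 set \<Rightarrow> 'a \<Rightarrow> 'a set" where
  "pcoset N f = (\<lambda>x. f + x) ` N"

definition cadd :: "'a::comm_ring_1 set \<Rightarrow> 'a set \<Rightarrow> 'a set" where
  "cadd U W = (\<lambda>(x, y). x + y) ` (U \<times> W)"

definition rep :: "'a set \<Rightarrow> 'a" where
  "rep U = (SOME x. x \<in> U)"

text \<open>Elements of the graded module \<Oplus>_m A_m/N_m: families of cosets, almost all zero.\<close>
definition graded_carrier :: "(nat \<Rightarrow> 'a::comm_ring_1 set) \<Rightarrow> (nat \<Rightarrow> 'a set) \<Rightarrow> (nat \<Rightarrow> 'a set) set" where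
  "graded_carrier A N = {x. (\<forall>m. x m \<in> pcoset (N m) ` A m) \<and> finite {m. x m \<noteq> N m}}"

definition graded_mult :: "(nat \<Rightarrow> 'a::comm_ring_1 set) \<Rightarrow> (nat \<Rightarrow> 'a set) \<Rightarrow> (nat \<Rightarrow> 'a set) \<Rightarrow> nat \<Rightarrow> 'a set" where
  "graded_mult N x y = (\<lambda>m. pcoset (N m) (\<Sum>i\<le>m. rep (x i) * rep (y (m - i))))"

definition fiber_cone :: "('v, 'k::field) mpoly set \<Rightarrow> (nat \<Rightarrow> ('v, 'k) mpoly set) ring" where
  "fiber_cone I =
    (let A = (\<lambda>m. ideal_pow I m); N = (\<lambda>m. ideal_prod max_ideal (ideal_pow I m)) in
     \<lparr> carrier = graded_carrier A N,
       monoid.mult = graded_mult N,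
       one = (\<lambda>m. if m = 0 then pcoset (N 0) 1 else N m),
       ring.zero = N,
       ring.add = (\<lambda>x y m. cadd (x m) (y m)) \<rparr>)"

text \<open>Soc(I) as an F(I)-module (the ring fields mult/one of the record are irrelevant).\<close>
definition socle_module :: "('v, 'k::field) mpoly set \<Rightarrow>
    (nat \<Rightarrow> ('v, 'k) mpoly set, nat \<Rightarrow> ('v, 'k) mpoly set) module" where
  "socle_module I =
    (let A = (\<lambda>m. ideal_colon (ideal_pow I m) max_ideal); N = (\<lambda>m. ideal_pow I m) in
     \<lparr> carrier = graded_carrier A N,
       monoid.mult = graded_mult N,
       one = (\<lambda>m. pcoset (N m) (if m = 0 then 1 else 0)),
       ring.zero = N,
       ring.add = (\<lambda>x y m. cadd (x m) (y m)),
       module.smult = graded_mult N \<rparr>)"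

definition iso_to_ideal :: "('a, 'c) ring_scheme \<Rightarrow> ('a, 'b, 'd) module_scheme \<Rightarrow> bool" where
  "iso_to_ideal R M \<longleftrightarrow>
     (\<exists>J \<phi>. ideal J R \<and> bij_betw \<phi> (carrier M) J
        \<and> (\<forall>x\<in>carrier M. \<forall>y\<in>carrier M. \<phi> (x \<oplus>\<^bsub>M\<^esub> y) = \<phi> x \<oplus>\<^bsub>R\<^esub> \<phi> y)
        \<and> (\<forall>r\<in>carrier R. \<forall>x\<in>carrier M. \<phi> (r \<odot>\<^bsub>M\<^esub> x) = r \<otimes>\<^bsub>R\<^esub> \<phi> x))"

definition lin_indep :: "('a, 'c) ring_scheme \<Rightarrow> ('a, 'b, 'd) module_scheme \<Rightarrow> 'b set \<Rightarrow> bool" where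
  "lin_indep R M B \<longleftrightarrow> finite B \<and> B \<subseteq> carrier M \<and>
     (\<forall>c \<in> B \<rightarrow> carrier R.
        finsum M (\<lambda>x. c x \<odot>\<^bsub>M\<^esub> x) B = \<zero>\<^bsub>M\<^esub> \<longrightarrow> (\<forall>x\<in>B. c x = \<zero>\<^bsub>R\<^esub>))"

definition module_rank :: "('a, 'c) ring_scheme \<Rightarrow> ('a, 'b, 'd) module_scheme \<Rightarrow> nat" where
  "module_rank R M = (GREATEST k. \<exists>B. lin_indep R M B \<and> card B = k)"

end

theory Submission
  imports Defs "HOL-Computational_Algebra.Formal_Power_Series"
begin

text \<open>
  Let \<open>x\<close> be a variable. If \<open>u\<close> is a monomial in \<open>(I\<^sup>m : m) - I\<^sup>m\<close>, then \<open>x u\<close> lies in \<open>I\<^sup>m\<close>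
  and has degree \<open>md\<close>, whereas every monomial of \<open>m I\<^sup>m\<close> has degree \<open>> md\<close>. Since all ideals
  involved are monomial, multiplication by \<open>x\<close> therefore induces an injective \<open>F(I)\<close>-linear map
  \<open>Soc(I) \<rightarrow> F(I)\<close>, and \<open>Soc(I)\<close> is isomorphic to its image, an ideal of \<open>F(I)\<close>.

  An injective linear map \<open>\<phi>\<close> into a commutative ring makes any two elements \<open>s, t\<close> dependent,
  as \<open>\<phi>(t) s - \<phi>(s) t\<close> maps to \<open>0\<close>. On the other hand, a socle monomial \<open>u\<close> of degree \<open>md - 1\<close> is
  torsion-free: if \<open>f u \<in> I\<^sup>i\<^sup>+\<^sup>m\<close> with \<open>f \<in> I\<^sup>i\<close>, all terms of \<open>f\<close> have degree \<open>> id\<close>,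
  and monomials of \<open>I\<^sup>i\<close> of degree \<open>> id\<close> lie in \<open>m I\<^sup>i\<close> because \<open>I\<close> is generated in
  degree \<open>d\<close>. So the rank is \<open>1\<close>.
\<close>

section \<open>Modules embedded into a commutative ring\<close>

locale ring_embedded_module =
  R: cring R + M: abelian_group M
  for R :: "('a, 'c) ring_scheme" and M :: "('a, 'b, 'd) module_scheme" and \<phi> :: "'b \<Rightarrow> 'a" +
  assumes smult_closed: "\<lbrakk>r \<in> carrier R; x \<in> carrier M\<rbrakk> \<Longrightarrow> r \<odot>\<^bsub>M\<^esub> x \<in> carrier M"
    and hom_closed: "x \<in> carrier M \<Longrightarrow> \<phi> x \<in> carrier R"
    and hom_inj: "inj_on \<phi> (carrier M)"
    and hom_add: "\<lbrakk>x \<in> carrier M; y \<in> carrier M\<rbrakk> \<Longrightarrow> \<phi> (x \<oplus>\<^bsub>M\<^esub> y) = \<phi> x \<oplus>\<^bsub>R\<^esub> \<phi> y"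
    and hom_smult: "\<lbrakk>r \<in> carrier R; x \<in> carrier M\<rbrakk> \<Longrightarrow> \<phi> (r \<odot>\<^bsub>M\<^esub> x) = r \<otimes>\<^bsub>R\<^esub> \<phi> x"
begin

lemma hom_zero: "\<phi> \<zero>\<^bsub>M\<^esub> = \<zero>\<^bsub>R\<^esub>"
proof -
  have "\<phi> \<zero>\<^bsub>M\<^esub> \<oplus>\<^bsub>R\<^esub> \<phi> \<zero>\<^bsub>M\<^esub> = \<phi> \<zero>\<^bsub>M\<^esub> \<oplus>\<^bsub>R\<^esub> \<zero>\<^bsub>R\<^esub>"
    using hom_add[OF M.zero_closed M.zero_closed] hom_closed[OF M.zero_closed] by simp
  then show ?thesis
    using hom_closed[OF M.zero_closed] by simp
qed

lemma hom_eq_zero_iff: "x \<in> carrier M \<Longrightarrow> \<phi> x = \<zero>\<^bsub>R\<^esub> \<longleftrightarrow> x = \<zero>\<^bsub>M\<^esub>"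
  using hom_inj hom_zero by (metis M.zero_closed inj_on_eq_iff)

lemma hom_a_inv: "x \<in> carrier M \<Longrightarrow> \<phi> (\<ominus>\<^bsub>M\<^esub> x) = \<ominus>\<^bsub>R\<^esub> \<phi> x"
  by (metis M.a_inv_closed M.l_neg R.minus_equality hom_add hom_closed hom_zero)

lemma zero_smult: "x \<in> carrier M \<Longrightarrow> \<zero>\<^bsub>R\<^esub> \<odot>\<^bsub>M\<^esub> x = \<zero>\<^bsub>M\<^esub>"
  by (simp add: hom_closed hom_eq_zero_iff hom_smult smult_closed flip: hom_eq_zero_iff)

lemma ideal_image: "ideal (\<phi> ` carrier M) R"
proof (rule idealI)
  show "subgroup (\<phi> ` carrier M) (add_monoid R)"
  proof (rule subgroup.intro)
    show "\<one>\<^bsub>add_monoid R\<^esub> \<in> \<phi> ` carrier M"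
      using hom_zero M.zero_closed by (force simp: image_iff)
  qed (auto simp: hom_closed a_inv_def[symmetric] simp flip: hom_add hom_a_inv)
next
  fix a r assume "a \<in> \<phi> ` carrier M" "r \<in> carrier R"
  then show "r \<otimes>\<^bsub>R\<^esub> a \<in> \<phi> ` carrier M" "a \<otimes>\<^bsub>R\<^esub> r \<in> \<phi> ` carrier M"
    by (auto simp: R.m_comm hom_closed simp flip: hom_smult intro: smult_closed)
qed (rule R.ring_axioms)

lemma iso_to_ideal: "iso_to_ideal R M"
  unfolding iso_to_ideal_def
  using ideal_image hom_inj hom_add hom_smult by (blast intro: inj_on_imp_bij_betw)

lemma smult_cross_eq_zero:
  assumes x: "x \<in> carrier M" and y: "y \<in> carrier M"
  shows "\<phi> y \<odot>\<^bsub>M\<^esub> x \<oplus>\<^bsub>M\<^esub> (\<ominus>\<^bsub>R\<^esub> \<phi> x) \<odot>\<^bsub>M\<^esub> y = \<zero>\<^bsub>M\<^esub>"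
proof -
  have "\<phi> (\<phi> y \<odot>\<^bsub>M\<^esub> x \<oplus>\<^bsub>M\<^esub> (\<ominus>\<^bsub>R\<^esub> \<phi> x) \<odot>\<^bsub>M\<^esub> y)
      = \<phi> y \<otimes>\<^bsub>R\<^esub> \<phi> x \<oplus>\<^bsub>R\<^esub> (\<ominus>\<^bsub>R\<^esub> \<phi> x) \<otimes>\<^bsub>R\<^esub> \<phi> y"
    using x y by (simp add: hom_add hom_smult hom_closed smult_closed)
  also have "\<dots> = \<zero>\<^bsub>R\<^esub>"
    using x y by (simp add: hom_closed R.l_minus R.m_comm[of "\<phi> y"] R.r_neg)
  finally show ?thesis
    using x y by (simp add: hom_eq_zero_iff hom_closed smult_closed)
qed

lemma lin_indep_card_le_1:
  assumes B: "lin_indep R M B"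
  shows "card B \<le> 1"
proof (rule ccontr)
  assume "\<not> card B \<le> 1"
  have B_carrier: "finite B" "B \<subseteq> carrier M"
    using B by (auto simp: lin_indep_def)
  with \<open>\<not> card B \<le> 1\<close> obtain x y where xy: "x \<in> B" "y \<in> B" "x \<noteq> y"
    using card_le_Suc0_iff_eq by (metis One_nat_def)
  have x: "x \<in> carrier M" and y: "y \<in> carrier M"
    using B_carrier xy by auto
  define c where "c z = (if z = x then \<phi> y else if z = y then \<ominus>\<^bsub>R\<^esub> \<phi> x else \<zero>\<^bsub>R\<^esub>)" for z
  have c: "c \<in> B \<rightarrow> carrier R"
    using x y by (auto simp: c_def hom_closed)
  then have "(\<lambda>z. c z \<odot>\<^bsub>M\<^esub> z) \<in> B \<rightarrow> carrier M"
    using B_carrier by (auto intro: smult_closed)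
  then have "finsum M (\<lambda>z. c z \<odot>\<^bsub>M\<^esub> z) B = finsum M (\<lambda>z. c z \<odot>\<^bsub>M\<^esub> z) {x, y}"
    using B_carrier xy
    by (intro M.add.finprod_mono_neutral_cong_right) (auto simp: c_def zero_smult)
  also have "\<dots> = \<zero>\<^bsub>M\<^esub>"
    using x y xy(3) smult_cross_eq_zero[OF x y] by (simp add: c_def hom_closed smult_closed)
  finally have "\<forall>z\<in>B. c z = \<zero>\<^bsub>R\<^esub>"
    using B c unfolding lin_indep_def by blast
  then have "\<phi> y = \<zero>\<^bsub>R\<^esub>" and "\<ominus>\<^bsub>R\<^esub> \<phi> x = \<zero>\<^bsub>R\<^esub>"
    using xy by (auto simp: c_def split: if_splits)
  moreover from this(2) have "\<phi> x = \<zero>\<^bsub>R\<^esub>"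
    by (metis R.minus_minus R.minus_zero hom_closed x)
  ultimately show False
    using x y xy(3) by (simp add: hom_eq_zero_iff)
qed

lemma lin_indep_singleton:
  assumes "x \<in> carrier M" and "\<And>r. r \<in> carrier R \<Longrightarrow> r \<odot>\<^bsub>M\<^esub> x = \<zero>\<^bsub>M\<^esub> \<Longrightarrow> r = \<zero>\<^bsub>R\<^esub>"
  shows "lin_indep R M {x}"
  using assms by (auto simp: lin_indep_def smult_closed)

lemma module_rank_eq_1:
  assumes "x \<in> carrier M" and "\<And>r. r \<in> carrier R \<Longrightarrow> r \<odot>\<^bsub>M\<^esub> x = \<zero>\<^bsub>M\<^esub> \<Longrightarrow> r = \<zero>\<^bsub>R\<^esub>"
  shows "module_rank R M = 1"
  unfolding module_rank_def
proof (rule Greatest_equality)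
  show "\<exists>B. lin_indep R M B \<and> card B = 1"
    using lin_indep_singleton[OF assms] by (intro exI[of _ "{x}"]) simp
qed (use lin_indep_card_le_1 in blast)

end

section \<open>Ideals of a commutative ring\<close>

lemma is_idealD:
  assumes "is_ideal J"
  shows "0 \<in> J" "\<And>x y. x \<in> J \<Longrightarrow> y \<in> J \<Longrightarrow> x + y \<in> J" "\<And>r x. x \<in> J \<Longrightarrow> r * x \<in> J"
  using assms unfolding is_ideal_def by auto

lemma is_ideal_mult_right: "is_ideal J \<Longrightarrow> x \<in> J \<Longrightarrow> x * r \<in> J"
  by (metis is_idealD(3) mult.commute)

lemma is_ideal_uminus: "is_ideal J \<Longrightarrow> x \<in> J \<Longrightarrow> - x \<in> J"
  by (metis is_idealD(3) mult_minus1)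

lemma is_ideal_diff: "is_ideal J \<Longrightarrow> x \<in> J \<Longrightarrow> y \<in> J \<Longrightarrow> x - y \<in> J"
  by (metis diff_conv_add_uminus is_ideal_uminus is_idealD(2))

lemma is_ideal_sum: "is_ideal J \<Longrightarrow> (\<And>i. i \<in> S \<Longrightarrow> f i \<in> J) \<Longrightarrow> sum f S \<in> J"
  by (induction S rule: infinite_finite_induct) (auto simp: is_idealD)

lemma is_ideal_mult_preimage: "is_ideal J \<Longrightarrow> is_ideal {a. a * x \<in> J}"
  unfolding is_ideal_def by (auto simp: distrib_right mult.assoc)

lemma is_ideal_ideal_gen: "is_ideal (ideal_gen G)"
  unfolding ideal_gen_def is_ideal_def by auto

lemma ideal_gen_subset: "G \<subseteq> ideal_gen G"
  unfolding ideal_gen_def by auto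

lemma ideal_gen_least: "G \<subseteq> J \<Longrightarrow> is_ideal J \<Longrightarrow> ideal_gen G \<subseteq> J"
  unfolding ideal_gen_def by auto

lemma is_ideal_ideal_prod: "is_ideal (ideal_prod A B)"
  unfolding ideal_prod_def by (rule is_ideal_ideal_gen)

lemma ideal_prod_mem: "a \<in> A \<Longrightarrow> b \<in> B \<Longrightarrow> a * b \<in> ideal_prod A B"
  unfolding ideal_prod_def using ideal_gen_subset by fastforce

lemma ideal_prod_least:
  "(\<And>a b. a \<in> A \<Longrightarrow> b \<in> B \<Longrightarrow> a * b \<in> J) \<Longrightarrow> is_ideal J \<Longrightarrow> ideal_prod A B \<subseteq> J"
  unfolding ideal_prod_def by (rule ideal_gen_least) auto

lemma ideal_prod_subset_right: "is_ideal J \<Longrightarrow> ideal_prod A J \<subseteq> J"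
  by (rule ideal_prod_least) (auto intro: is_idealD(3))

lemma ideal_prod_mult_right:
  assumes "a \<in> ideal_prod A B" and "\<And>x. x \<in> B \<Longrightarrow> x * b \<in> D"
  shows "a * b \<in> ideal_prod A D"
proof -
  have "ideal_prod A B \<subseteq> {a. a * b \<in> ideal_prod A D}"
    using assms(2) ideal_prod_mem
    by (intro ideal_prod_least is_ideal_mult_preimage is_ideal_ideal_prod)
      (fastforce simp: mult.assoc)
  then show ?thesis
    using assms(1) by auto
qed

lemma is_ideal_ideal_pow: "is_ideal (ideal_pow A m)"
  by (cases m) (simp_all add: is_ideal_ideal_prod is_ideal_def[of UNIV])

lemma ideal_pow_mult: "a \<in> ideal_pow I i \<Longrightarrow> b \<in> ideal_pow I j \<Longrightarrow> a * b \<in> ideal_pow I (i + j)"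
proof (induction i arbitrary: a)
  case 0
  then show ?case
    using is_idealD(3)[OF is_ideal_ideal_pow] by simp
next
  case (Suc i)
  then show ?case
    by (auto intro: ideal_prod_mult_right)
qed

lemma ideal_prod_pow_mult:
  "a \<in> ideal_prod A (ideal_pow I i) \<Longrightarrow> b \<in> ideal_pow I j \<Longrightarrow>
    a * b \<in> ideal_prod A (ideal_pow I (i + j))"
  by (rule ideal_prod_mult_right) (auto intro: ideal_pow_mult)

lemma ideal_prod_mult_prod_left:
  "x \<in> ideal_prod P A \<Longrightarrow> y \<in> B \<Longrightarrow> x * y \<in> ideal_prod P (ideal_prod A B)"
  by (rule ideal_prod_mult_right) (auto intro: ideal_prod_mem)

lemma ideal_prod_mult_prod_right:
  assumes "x \<in> A" and "y \<in> ideal_prod P B"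
  shows "x * y \<in> ideal_prod P (ideal_prod A B)"
proof -
  have "z * x \<in> ideal_prod A B" if "z \<in> B" for z
    using ideal_prod_mem[OF assms(1) that] by (simp add: mult.commute)
  then show ?thesis
    using ideal_prod_mult_right[OF assms(2)] by (simp add: mult.commute)
qed

lemma ideal_colonD: "f \<in> ideal_colon A B \<Longrightarrow> b \<in> B \<Longrightarrow> f * b \<in> A"
  unfolding ideal_colon_def by blast

lemma is_ideal_ideal_colon: "is_ideal A \<Longrightarrow> is_ideal (ideal_colon A B)"
  unfolding is_ideal_def ideal_colon_def by (auto simp: distrib_right mult.assoc)

lemma ideal_subset_colon: "is_ideal J \<Longrightarrow> J \<subseteq> ideal_colon J B"
  unfolding ideal_colon_def using is_ideal_mult_right by blast

lemma ideal_pow_mult_colon: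
  "a \<in> ideal_pow I i \<Longrightarrow> x \<in> ideal_colon (ideal_pow I j) B \<Longrightarrow>
    a * x \<in> ideal_colon (ideal_pow I (i + j)) B"
  unfolding ideal_colon_def using ideal_pow_mult by (fastforce simp: mult.assoc)

lemma ideal_prod_mult_colon:
  assumes "a \<in> ideal_prod B (ideal_pow I i)" and "x \<in> ideal_colon (ideal_pow I j) B"
  shows "a * x \<in> ideal_pow I (i + j)"
proof -
  have "ideal_prod B (ideal_pow I i) \<subseteq> {a. a * x \<in> ideal_pow I (i + j)}"
  proof (intro ideal_prod_least is_ideal_mult_preimage is_ideal_ideal_pow CollectI)
    fix p q assume "p \<in> B" "q \<in> ideal_pow I i"
    then have "q * (x * p) \<in> ideal_pow I (i + j)"
      using assms(2) ideal_pow_mult unfolding ideal_colon_def by blast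
    then show "p * q * x \<in> ideal_pow I (i + j)"
      by (simp add: ac_simps)
  qed
  then show ?thesis
    using assms(1) by auto
qed

lemma is_ideal_max_ideal: "is_ideal max_ideal"
  unfolding max_ideal_def by (rule is_ideal_ideal_gen)

section \<open>Monomial ideals\<close>

definition var :: "'v \<Rightarrow> ('v, 'k::field) mpoly" where
  "var v = monom (Poly_Mapping.single v 1)"

lemma monom_add: "(monom (a + b) :: ('v, 'k::field) mpoly) = monom a * monom b"
  by (simp add: monom_def mult_single)

lemma keys_monom [simp]: "Poly_Mapping.keys (monom a :: ('v, 'k::field) mpoly) = {a}"
  by (simp add: monom_def)

lemma mdeg_eq_sum_UNIV: "mdeg (a :: 'v::finite \<Rightarrow>\<^sub>0 nat) = (\<Sum>v\<in>UNIV. Poly_Mapping.lookup a v)"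
  unfolding mdeg_def by (rule sum.mono_neutral_left) (auto simp: in_keys_iff)

lemma mdeg_add: "mdeg (a + b :: 'v::finite \<Rightarrow>\<^sub>0 nat) = mdeg a + mdeg b"
  by (simp add: mdeg_eq_sum_UNIV lookup_add sum.distrib)

lemma mdeg_single_1 [simp]: "mdeg (Poly_Mapping.single (v::'v::finite) 1) = 1"
  by (simp add: mdeg_def)

lemma lookup_mult_monom:
  "Poly_Mapping.lookup (p * monom a :: ('v, 'k::field) mpoly) (c + a) = Poly_Mapping.lookup p c"
proof -
  have inner: "Sum_any (\<lambda>q. Poly_Mapping.lookup (monom a :: ('v, 'k) mpoly) q when c + a = l + q)
      = (1 when l = c)" for l
  proof -
    have "Sum_any (\<lambda>q. Poly_Mapping.lookup (monom a :: ('v, 'k) mpoly) q when c + a = l + q)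
        = Sum_any (\<lambda>q. 1 when q = a \<and> l = c)"
      by (rule Sum_any.cong) (auto simp: monom_def lookup_single when_def)
    then show ?thesis
      by (cases "l = c") (auto simp: when_def)
  qed
  have "Poly_Mapping.lookup (p * monom a) (c + a) = Sum_any (\<lambda>l.
      Poly_Mapping.lookup p l * Sum_any (\<lambda>q. Poly_Mapping.lookup (monom a) q when c + a = l + q))"
    by (rule lookup_mult)
  also have "\<dots> = Sum_any (\<lambda>l. Poly_Mapping.lookup p l when l = c)"
    by (simp add: inner mult_when)
  also have "\<dots> = Poly_Mapping.lookup p c"
    by simp
  finally show ?thesis .
qed

lemma keys_mult_monom:
  "c \<in> Poly_Mapping.keys (p :: ('v, 'k::field) mpoly) \<Longrightarrow> c + a \<in> Poly_Mapping.keys (p * monom a)"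
  by (simp add: in_keys_iff lookup_mult_monom)

lemma poly_eq_sum_terms:
  "(p :: ('v, 'k::field) mpoly) =
     (\<Sum>c\<in>Poly_Mapping.keys p. Poly_Mapping.single 0 (Poly_Mapping.lookup p c) * monom c)"
proof (rule poly_mapping_eqI)
  fix k
  have "Poly_Mapping.lookup
          (\<Sum>c\<in>Poly_Mapping.keys p. Poly_Mapping.single 0 (Poly_Mapping.lookup p c) * monom c) k
      = (\<Sum>c\<in>Poly_Mapping.keys p. Poly_Mapping.lookup p c when c = k)"
    by (simp add: lookup_sum monom_def mult_single lookup_single when_def eq_commute)
  also have "\<dots> = Poly_Mapping.lookup p k"
    by (cases "k \<in> Poly_Mapping.keys p") (auto simp: when_def in_keys_iff)
  finally show "Poly_Mapping.lookup p k = Poly_Mapping.lookup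
      (\<Sum>c\<in>Poly_Mapping.keys p. Poly_Mapping.single 0 (Poly_Mapping.lookup p c) * monom c) k" ..
qed

lemma ideal_mem_if_terms_mem:
  fixes J :: "('v, 'k::field) mpoly set"
  assumes "is_ideal J" and "\<And>c. c \<in> Poly_Mapping.keys p \<Longrightarrow> monom c \<in> J"
  shows "p \<in> J"
  by (subst poly_eq_sum_terms) (use assms in \<open>auto intro: is_ideal_sum is_idealD(3)\<close>)

lemma is_ideal_terms_in:
  fixes J :: "('v, 'k::field) mpoly set"
  assumes "is_ideal J"
  shows "is_ideal {p. \<forall>c\<in>Poly_Mapping.keys p. monom c \<in> J}" (is "is_ideal ?T")
  unfolding is_ideal_def
proof (intro conjI ballI allI)
  fix x y assume "x \<in> ?T" "y \<in> ?T"
  then show "x + y \<in> ?T"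
    using keys_add[of x y] by auto
next
  fix r x assume x: "x \<in> ?T"
  have "monom c \<in> J" if c: "c \<in> Poly_Mapping.keys (r * x)" for c
  proof -
    obtain a b where "c = a + b" "b \<in> Poly_Mapping.keys x"
      using keys_mult[of r x] c by auto
    then show ?thesis
      using x is_idealD(3)[OF assms] by (auto simp: monom_add)
  qed
  then show "r * x \<in> ?T"
    by blast
qed simp

definition monomial_ideal :: "('v, 'k::field) mpoly set \<Rightarrow> bool" where
  "monomial_ideal J \<longleftrightarrow> is_ideal J \<and> (\<forall>p\<in>J. \<forall>c\<in>Poly_Mapping.keys p. monom c \<in> J)"

lemma monomial_idealD:
  "monomial_ideal J \<Longrightarrow> is_ideal J"
  "monomial_ideal J \<Longrightarrow> p \<in> J \<Longrightarrow> c \<in> Poly_Mapping.keys p \<Longrightarrow> monom c \<in> J"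
  unfolding monomial_ideal_def by blast+

lemma monomial_ideal_ideal_gen: "monomial_ideal (ideal_gen (monom ` G))"
proof -
  have "ideal_gen (monom ` G) \<subseteq> {p. \<forall>c\<in>Poly_Mapping.keys p. monom c \<in> ideal_gen (monom ` G)}"
    by (intro ideal_gen_least is_ideal_terms_in is_ideal_ideal_gen)
      (auto intro: ideal_gen_subset[THEN subsetD])
  then show ?thesis
    unfolding monomial_ideal_def using is_ideal_ideal_gen by blast
qed

lemma monomial_ideal_ideal_prod:
  assumes "monomial_ideal A" and "monomial_ideal B"
  shows "monomial_ideal (ideal_prod A B)"
proof -
  have "ideal_prod A B \<subseteq> {p. \<forall>c\<in>Poly_Mapping.keys p. monom c \<in> ideal_prod A B}"
  proof (intro ideal_prod_least is_ideal_terms_in is_ideal_ideal_prod CollectI ballI)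
    fix a b c assume "a \<in> A" "b \<in> B" "c \<in> Poly_Mapping.keys (a * b)"
    moreover obtain c1 c2 where "c = c1 + c2" "c1 \<in> Poly_Mapping.keys a" "c2 \<in> Poly_Mapping.keys b"
      using keys_mult[of a b] \<open>c \<in> Poly_Mapping.keys (a * b)\<close> by auto
    ultimately show "monom c \<in> ideal_prod A B"
      using monomial_idealD(2)[OF assms(1)] monomial_idealD(2)[OF assms(2)]
      by (simp add: monom_add ideal_prod_mem)
  qed
  then show ?thesis
    unfolding monomial_ideal_def using is_ideal_ideal_prod by blast
qed

lemma monomial_ideal_UNIV: "monomial_ideal UNIV"
  by (simp add: monomial_ideal_def is_ideal_def)

lemma monomial_ideal_ideal_pow: "monomial_ideal I \<Longrightarrow> monomial_ideal (ideal_pow I m)"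
  by (induction m) (simp_all add: monomial_ideal_UNIV monomial_ideal_ideal_prod)

lemma var_in_max_ideal: "var v \<in> max_ideal"
  unfolding max_ideal_def var_def by (rule ideal_gen_subset[THEN subsetD]) auto

lemma monom_in_max_ideal:
  assumes "0 < mdeg (c :: 'v::finite \<Rightarrow>\<^sub>0 nat)"
  shows "(monom c :: ('v, 'k::field) mpoly) \<in> max_ideal"
proof -
  obtain v where v: "0 < Poly_Mapping.lookup c v"
    using assms unfolding mdeg_def by (metis not_gr0 sum.neutral)
  have "c = (c - Poly_Mapping.single v 1) + Poly_Mapping.single v 1"
    by (rule poly_mapping_eqI)
      (use v in \<open>auto simp: lookup_add lookup_minus lookup_single when_def\<close>)
  then have "(monom c :: ('v, 'k) mpoly) = monom (c - Poly_Mapping.single v 1) * var v"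
    by (metis monom_add var_def)
  then show ?thesis
    using is_idealD(3)[OF is_ideal_max_ideal var_in_max_ideal] by metis
qed

lemma monomial_ideal_colon_max_ideal:
  fixes J :: "('v::finite, 'k::field) mpoly set"
  assumes J: "monomial_ideal J"
  shows "monomial_ideal (ideal_colon J max_ideal)"
  unfolding monomial_ideal_def
proof (intro conjI ballI is_ideal_ideal_colon monomial_idealD(1)[OF J])
  fix p c assume p: "p \<in> ideal_colon J max_ideal" and c: "c \<in> Poly_Mapping.keys p"
  have "var v * monom c \<in> J" for v
  proof -
    have "p * var v \<in> J"
      using p var_in_max_ideal by (rule ideal_colonD)
    moreover have "c + Poly_Mapping.single v 1 \<in> Poly_Mapping.keys (p * var v)"
      using keys_mult_monom[OF c] by (simp add: var_def)
    ultimately have "monom (c + Poly_Mapping.single v 1) \<in> J"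
      by (rule monomial_idealD(2)[OF J])
    then show ?thesis
      by (simp add: monom_add var_def mult.commute)
  qed
  then have "max_ideal \<subseteq> {b. b * monom c \<in> J}"
    unfolding max_ideal_def
    by (intro ideal_gen_least is_ideal_mult_preimage monomial_idealD(1)[OF J])
      (auto simp: var_def)
  then show "monom c \<in> ideal_colon J max_ideal"
    by (auto simp: ideal_colon_def mult.commute)
qed

definition degree_at_least :: "nat \<Rightarrow> ('v::finite, 'k::field) mpoly set" where
  "degree_at_least k = {p. \<forall>c\<in>Poly_Mapping.keys p. k \<le> mdeg c}"

lemma is_ideal_degree_at_least: "is_ideal (degree_at_least k :: ('v::finite, 'k::field) mpoly set)"
  unfolding is_ideal_def degree_at_least_def
proof (intro conjI ballI allI)
  fix x y :: "('v, 'k) mpoly"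
  assume "x \<in> {p. \<forall>c\<in>Poly_Mapping.keys p. k \<le> mdeg c}" "y \<in> {p. \<forall>c\<in>Poly_Mapping.keys p. k \<le> mdeg c}"
  then show "x + y \<in> {p. \<forall>c\<in>Poly_Mapping.keys p. k \<le> mdeg c}"
    using keys_add[of x y] by auto
next
  fix r x :: "('v, 'k) mpoly"
  assume x: "x \<in> {p. \<forall>c\<in>Poly_Mapping.keys p. k \<le> mdeg c}"
  have "k \<le> mdeg c" if c: "c \<in> Poly_Mapping.keys (r * x)" for c
  proof -
    obtain a b where "c = a + b" "b \<in> Poly_Mapping.keys x"
      using keys_mult[of r x] c by auto
    then show ?thesis
      using x by (auto simp: mdeg_add)
  qed
  then show "r * x \<in> {p. \<forall>c\<in>Poly_Mapping.keys p. k \<le> mdeg c}"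
    by blast
qed simp

lemma ideal_prod_degree_at_least:
  assumes "A \<subseteq> degree_at_least i" and "B \<subseteq> degree_at_least j"
  shows "ideal_prod A B \<subseteq> degree_at_least (i + j)"
proof (intro ideal_prod_least is_ideal_degree_at_least)
  fix a b assume ab: "a \<in> A" "b \<in> B"
  show "a * b \<in> degree_at_least (i + j)"
    unfolding degree_at_least_def
  proof (intro CollectI ballI)
    fix c assume "c \<in> Poly_Mapping.keys (a * b)"
    then obtain c1 c2 where "c = c1 + c2" "c1 \<in> Poly_Mapping.keys a" "c2 \<in> Poly_Mapping.keys b"
      using keys_mult[of a b] by auto
    then show "i + j \<le> mdeg c"
      using assms ab by (force simp: degree_at_least_def mdeg_add intro: add_mono)
  qed
qed

lemma ideal_pow_degree_at_least:
  assumes "I \<subseteq> degree_at_least d"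
  shows "ideal_pow I m \<subseteq> degree_at_least (m * d)"
proof (induction m)
  case 0
  then show ?case
    by (auto simp: degree_at_least_def)
next
  case (Suc m)
  then show ?case
    using ideal_prod_degree_at_least[OF assms Suc] by simp
qed

lemma max_ideal_degree_at_least: "max_ideal \<subseteq> degree_at_least 1"
  unfolding max_ideal_def
  by (intro ideal_gen_least is_ideal_degree_at_least) (auto simp: degree_at_least_def mdeg_def)

section \<open>Monomial ideals generated in one degree\<close>

text \<open>For a monomial ideal \<open>J\<close>, \<open>J \<subseteq> excess_in_max_prod J k\<close> says that \<open>J\<close> has no minimal
  generator of degree \<open>> k\<close>.\<close>

definition excess_in_max_prod ::
  "('v::finite, 'k::field) mpoly set \<Rightarrow> nat \<Rightarrow> ('v, 'k) mpoly set" where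
  "excess_in_max_prod J k =
     {p \<in> J. \<forall>c\<in>Poly_Mapping.keys p. k < mdeg c \<longrightarrow> monom c \<in> ideal_prod max_ideal J}"

lemma is_ideal_excess_in_max_prod:
  assumes J: "monomial_ideal J"
  shows "is_ideal (excess_in_max_prod J k)"
  unfolding is_ideal_def
proof (intro conjI ballI allI)
  show "0 \<in> excess_in_max_prod J k"
    using is_idealD(1)[OF monomial_idealD(1)[OF J]] by (simp add: excess_in_max_prod_def)
next
  fix x y assume "x \<in> excess_in_max_prod J k" "y \<in> excess_in_max_prod J k"
  then show "x + y \<in> excess_in_max_prod J k"
    using keys_add[of x y] is_idealD(2)[OF monomial_idealD(1)[OF J], of x y]
    unfolding excess_in_max_prod_def by blast
next
  fix r x assume x: "x \<in> excess_in_max_prod J k"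
  have "monom c \<in> ideal_prod max_ideal J"
    if c: "c \<in> Poly_Mapping.keys (r * x)" "k < mdeg c" for c
  proof -
    obtain c1 c2 where c12: "c = c1 + c2" "c2 \<in> Poly_Mapping.keys x"
      using keys_mult[of r x] c(1) by auto
    show ?thesis
    proof (cases "k < mdeg c2")
      case True
      then have "monom c2 \<in> ideal_prod max_ideal J"
        using x c12 by (auto simp: excess_in_max_prod_def)
      then show ?thesis
        using c12 by (simp add: monom_add is_idealD(3)[OF is_ideal_ideal_prod])
    next
      case False
      then have "monom c1 \<in> max_ideal"
        using c(2) c12 by (intro monom_in_max_ideal) (simp add: mdeg_add)
      moreover have "monom c2 \<in> J"
        using x c12 monomial_idealD(2)[OF J] by (auto simp: excess_in_max_prod_def)
      ultimately have "monom c1 * monom c2 \<in> ideal_prod max_ideal J"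
        by (rule ideal_prod_mem)
      then show ?thesis
        using c12 by (simp add: monom_add)
    qed
  qed
  moreover have "r * x \<in> J"
    using x is_idealD(3)[OF monomial_idealD(1)[OF J]] by (simp add: excess_in_max_prod_def)
  ultimately show "r * x \<in> excess_in_max_prod J k"
    by (simp add: excess_in_max_prod_def)
qed

lemma ideal_prod_subset_excess:
  assumes A: "monomial_ideal A" "A \<subseteq> degree_at_least a" "A \<subseteq> excess_in_max_prod A a"
    and B: "monomial_ideal B" "B \<subseteq> degree_at_least b" "B \<subseteq> excess_in_max_prod B b"
  shows "ideal_prod A B \<subseteq> excess_in_max_prod (ideal_prod A B) (a + b)"
proof (intro ideal_prod_least is_ideal_excess_in_max_prod monomial_ideal_ideal_prod A(1) B(1))
  fix p q assume p: "p \<in> A" and q: "q \<in> B"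
  have "monom c \<in> ideal_prod max_ideal (ideal_prod A B)"
    if c: "c \<in> Poly_Mapping.keys (p * q)" "a + b < mdeg c" for c
  proof -
    obtain c1 c2 where c12: "c = c1 + c2" "c1 \<in> Poly_Mapping.keys p" "c2 \<in> Poly_Mapping.keys q"
      using keys_mult[of p q] c(1) by auto
    have c1: "monom c1 \<in> A" "a \<le> mdeg c1"
      using monomial_idealD(2)[OF A(1) p c12(2)] subsetD[OF A(2) p] c12(2)
      by (auto simp: degree_at_least_def)
    have c2: "monom c2 \<in> B" "b \<le> mdeg c2"
      using monomial_idealD(2)[OF B(1) q c12(3)] subsetD[OF B(2) q] c12(3)
      by (auto simp: degree_at_least_def)
    show ?thesis
    proof (cases "b < mdeg c2")
      case True
      then have "monom c2 \<in> ideal_prod max_ideal B"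
        using subsetD[OF B(3) q] c12(3) by (simp add: excess_in_max_prod_def)
      then show ?thesis
        using c12 c1 by (simp add: monom_add ideal_prod_mult_prod_right)
    next
      case False
      then have "a < mdeg c1"
        using c(2) c12 c2 by (simp add: mdeg_add)
      then have "monom c1 \<in> ideal_prod max_ideal A"
        using subsetD[OF A(3) p] c12(2) by (simp add: excess_in_max_prod_def)
      then show ?thesis
        using c12 c2 by (simp add: monom_add ideal_prod_mult_prod_left)
    qed
  qed
  then show "p * q \<in> excess_in_max_prod (ideal_prod A B) (a + b)"
    using p q by (simp add: excess_in_max_prod_def ideal_prod_mem)
qed

context
  fixes I :: "('v::finite, 'k::field) mpoly set" and d :: nat
  assumes gen: "monomial_ideal_gen_in_degree I d"
begin

lemma monomial_ideal_gen_in_degree_imp_monomial: "monomial_ideal I"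
  using gen monomial_ideal_ideal_gen by (auto simp: monomial_ideal_gen_in_degree_def)

lemma monomial_ideal_gen_in_degree_imp_degree_at_least: "I \<subseteq> degree_at_least d"
proof -
  obtain G where G: "\<forall>a\<in>G. mdeg a = d" "I = ideal_gen (monom ` G)"
    using gen unfolding monomial_ideal_gen_in_degree_def by blast
  show ?thesis
    unfolding G(2)
    by (intro ideal_gen_least is_ideal_degree_at_least)
      (use G(1) in \<open>auto simp: degree_at_least_def\<close>)
qed

lemma monomial_ideal_gen_in_degree_imp_excess: "I \<subseteq> excess_in_max_prod I d"
proof -
  obtain G where G: "\<forall>a\<in>G. mdeg a = d" "I = ideal_gen (monom ` G)"
    using gen unfolding monomial_ideal_gen_in_degree_def by blast
  show ?thesis
    unfolding G(2)
    using G(1) ideal_gen_subset[of "monom ` G"]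
    by (intro ideal_gen_least is_ideal_excess_in_max_prod monomial_ideal_ideal_gen)
      (auto simp: excess_in_max_prod_def)
qed

lemma ideal_pow_subset_excess: "ideal_pow I i \<subseteq> excess_in_max_prod (ideal_pow I i) (i * d)"
proof (induction i)
  case 0
  have "monom c \<in> ideal_prod max_ideal UNIV" if "0 < mdeg c" for c :: "'v \<Rightarrow>\<^sub>0 nat"
    using ideal_prod_mem[OF monom_in_max_ideal[OF that], of 1 UNIV] by simp
  then show ?case
    by (auto simp: excess_in_max_prod_def)
next
  case (Suc i)
  note mono = monomial_ideal_gen_in_degree_imp_monomial
  note deg = monomial_ideal_gen_in_degree_imp_degree_at_least
  show ?case
    using ideal_prod_subset_excess[OF mono deg monomial_ideal_gen_in_degree_imp_excess
        monomial_ideal_ideal_pow[OF mono] ideal_pow_degree_at_least[OF deg] Suc.IH]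
    by simp
qed

lemma ideal_pow_monom_in_max_prod:
  assumes "monom c \<in> ideal_pow I i" and "i * d < mdeg c"
  shows "monom c \<in> ideal_prod max_ideal (ideal_pow I i)"
proof -
  have "monom c \<in> excess_in_max_prod (ideal_pow I i) (i * d)"
    using assms(1) ideal_pow_subset_excess by blast
  then show ?thesis
    using assms(2) by (simp add: excess_in_max_prod_def)
qed

end

section \<open>Graded quotients\<close>

lemma pcoset_self: "is_ideal N \<Longrightarrow> a \<in> pcoset N a"
  unfolding pcoset_def using is_idealD(1)[of N] by (metis add.right_neutral image_eqI)

lemma pcoset_0 [simp]: "pcoset N 0 = N"
  by (simp add: pcoset_def)

lemma pcoset_eq_iff:
  assumes N: "is_ideal N"
  shows "pcoset N a = pcoset N b \<longleftrightarrow> a - b \<in> N"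
proof
  assume "pcoset N a = pcoset N b"
  then obtain n where "n \<in> N" "a = b + n"
    using pcoset_self[OF N, of a] by (auto simp: pcoset_def)
  then show "a - b \<in> N"
    by simp
next
  assume ab: "a - b \<in> N"
  show "pcoset N a = pcoset N b"
  proof (auto simp: pcoset_def)
    fix n assume "n \<in> N"
    then have "(a - b) + n \<in> N"
      using ab is_idealD(2)[OF N] by blast
    then show "a + n \<in> (+) b ` N"
      by (rule rev_image_eqI) simp
  next
    fix n assume "n \<in> N"
    then have "n - (a - b) \<in> N"
      using ab is_ideal_diff[OF N] by blast
    then show "b + n \<in> (+) a ` N"
      by (rule rev_image_eqI) simp
  qed
qed

lemma pcoset_eq_self_iff: "is_ideal N \<Longrightarrow> pcoset N a = N \<longleftrightarrow> a \<in> N"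
  using pcoset_eq_iff[of N a 0] by simp

lemma rep_pcoset_diff: "is_ideal N \<Longrightarrow> rep (pcoset N a) - a \<in> N"
  using someI[of "\<lambda>x. x \<in> pcoset N a", OF pcoset_self] by (auto simp: rep_def pcoset_def)

lemma cadd_pcoset:
  assumes N: "is_ideal N"
  shows "cadd (pcoset N a) (pcoset N b) = pcoset N (a + b)"
proof (auto simp: cadd_def pcoset_def)
  fix n1 n2 assume "n1 \<in> N" "n2 \<in> N"
  then have "n1 + n2 \<in> N"
    using is_idealD(2)[OF N] by blast
  then show "a + n1 + (b + n2) \<in> (+) (a + b) ` N"
    by (rule rev_image_eqI) (simp add: ac_simps)
next
  fix n assume "n \<in> N"
  then have "(a + n, b + 0) \<in> (+) a ` N \<times> (+) b ` N"
    using is_idealD(1)[OF N] by blast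
  then show "a + b + n \<in> (\<lambda>(x, y). x + y) ` ((+) a ` N \<times> (+) b ` N)"
    by (rule rev_image_eqI) (simp add: ac_simps)
qed

text \<open>
  Elements of \<open>graded_carrier A N\<close> are represented by power series \<open>f\<close> with
  \<open>fps_nth f m \<in> A m\<close>. As \<open>graded_mult\<close> multiplies the representatives picked by \<open>rep\<close>,
  the point of \<open>graded_mult_class\<close> is that any representatives may be used.
\<close>

definition graded_class :: "(nat \<Rightarrow> 'a::comm_ring_1 set) \<Rightarrow> 'a fps \<Rightarrow> nat \<Rightarrow> 'a set" where
  "graded_class N f = (\<lambda>m. pcoset (N m) (fps_nth f m))"

definition graded_rep :: "(nat \<Rightarrow> 'a set) \<Rightarrow> 'a::comm_ring_1 fps" where
  "graded_rep x = Abs_fps (\<lambda>m. rep (x m))"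

definition fps_graded_in :: "(nat \<Rightarrow> 'a::comm_ring_1 set) \<Rightarrow> 'a fps \<Rightarrow> bool" where
  "fps_graded_in A f \<longleftrightarrow> (\<forall>m. fps_nth f m \<in> A m)"

definition fps_finite_mod :: "(nat \<Rightarrow> 'a::comm_ring_1 set) \<Rightarrow> 'a fps \<Rightarrow> bool" where
  "fps_finite_mod N f \<longleftrightarrow> finite {m. fps_nth f m \<notin> N m}"

definition fps_cong_mod :: "(nat \<Rightarrow> 'a::comm_ring_1 set) \<Rightarrow> 'a fps \<Rightarrow> 'a fps \<Rightarrow> bool" where
  "fps_cong_mod N f g \<longleftrightarrow> (\<forall>m. fps_nth f m - fps_nth g m \<in> N m)"

lemma fps_finite_modE:
  assumes "fps_finite_mod N f"
  obtains M where "\<And>m. M < m \<Longrightarrow> fps_nth f m \<in> N m"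
proof -
  obtain M where "\<And>m. m \<in> {m. fps_nth f m \<notin> N m} \<Longrightarrow> m \<le> M"
    using assms unfolding fps_finite_mod_def by (metis finite_nat_set_iff_bounded_le)
  then show ?thesis
    using that by (meson not_le mem_Collect_eq)
qed

lemma fps_nth_mult_const_X_power:
  "fps_nth (h * (fps_const c * fps_X ^ m)) (i + m) = fps_nth h i * c"
proof -
  have "h * (fps_const c * fps_X ^ m) = (h * fps_const c) * fps_X ^ m"
    by (simp add: mult.assoc)
  then show ?thesis
    by (simp add: fps_X_power_mult_right_nth)
qed

locale graded_quotient =
  fixes A N :: "nat \<Rightarrow> 'a::comm_ring_1 set"
  assumes is_ideal_A: "\<And>m. is_ideal (A m)" and is_ideal_N: "\<And>m. is_ideal (N m)"
    and N_subset_A: "\<And>m. N m \<subseteq> A m"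
begin

lemma graded_class_eq_iff: "graded_class N f = graded_class N g \<longleftrightarrow> fps_cong_mod N f g"
  unfolding graded_class_def fps_cong_mod_def fun_eq_iff using pcoset_eq_iff[OF is_ideal_N] by blast

lemma graded_class_eq_self_iff: "graded_class N f m = N m \<longleftrightarrow> fps_nth f m \<in> N m"
  unfolding graded_class_def using pcoset_eq_self_iff[OF is_ideal_N] by blast

lemma graded_class_0: "graded_class N 0 = N"
  by (simp add: graded_class_def fun_eq_iff)

lemma graded_class_in_carrier:
  "fps_graded_in A f \<Longrightarrow> fps_finite_mod N f \<Longrightarrow> graded_class N f \<in> graded_carrier A N"
  unfolding graded_carrier_def fps_graded_in_def fps_finite_mod_def
  by (auto simp: graded_class_eq_self_iff) (auto simp: graded_class_def)

lemma graded_carrierE: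
  assumes "x \<in> graded_carrier A N"
  obtains f where "fps_graded_in A f" "fps_finite_mod N f" "x = graded_class N f"
proof -
  have "\<forall>m. \<exists>a. a \<in> A m \<and> x m = pcoset (N m) a"
    using assms by (auto simp: graded_carrier_def)
  then obtain g where g: "\<And>m. g m \<in> A m" "\<And>m. x m = pcoset (N m) (g m)"
    by metis
  then have x: "x = graded_class N (Abs_fps g)"
    by (simp add: graded_class_def fun_eq_iff)
  moreover have "finite {m. fps_nth (Abs_fps g) m \<notin> N m}"
    using assms x graded_class_eq_self_iff by (simp add: graded_carrier_def)
  ultimately show ?thesis
    using g by (intro that[of "Abs_fps g"]) (simp_all add: fps_graded_in_def fps_finite_mod_def)
qed

lemma fps_cong_mod_graded_rep: "fps_cong_mod N (graded_rep (graded_class N f)) f"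
  by (simp add: fps_cong_mod_def graded_rep_def graded_class_def rep_pcoset_diff is_ideal_N)

lemma fps_graded_in_graded_rep:
  assumes "fps_graded_in A f"
  shows "fps_graded_in A (graded_rep (graded_class N f))"
proof -
  have "fps_nth (graded_rep (graded_class N f)) m \<in> A m" for m
  proof -
    have "fps_nth (graded_rep (graded_class N f)) m - fps_nth f m \<in> A m"
      using fps_cong_mod_graded_rep[of f] N_subset_A unfolding fps_cong_mod_def by blast
    then have "(fps_nth (graded_rep (graded_class N f)) m - fps_nth f m) + fps_nth f m \<in> A m"
      using assms is_idealD(2)[OF is_ideal_A] unfolding fps_graded_in_def by blast
    then show ?thesis
      by simp
  qed
  then show ?thesis
    unfolding fps_graded_in_def by blast
qed

lemma graded_class_add:
  "(\<lambda>m. cadd (graded_class N f m) (graded_class N g m)) = graded_class N (f + g)"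
  by (simp add: graded_class_def cadd_pcoset[OF is_ideal_N] fun_eq_iff)

lemma fps_graded_in_add: "fps_graded_in A f \<Longrightarrow> fps_graded_in A g \<Longrightarrow> fps_graded_in A (f + g)"
  by (simp add: fps_graded_in_def is_idealD(2)[OF is_ideal_A])

lemma fps_graded_in_uminus: "fps_graded_in A f \<Longrightarrow> fps_graded_in A (- f)"
  by (simp add: fps_graded_in_def is_ideal_uminus[OF is_ideal_A])

lemma fps_graded_in_0: "fps_graded_in A 0"
  by (simp add: fps_graded_in_def is_idealD(1)[OF is_ideal_A])

lemma fps_finite_mod_add:
  assumes "fps_finite_mod N f" and "fps_finite_mod N g"
  shows "fps_finite_mod N (f + g)"
proof -
  have "{m. fps_nth (f + g) m \<notin> N m} \<subseteq> {m. fps_nth f m \<notin> N m} \<union> {m. fps_nth g m \<notin> N m}"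
    using is_idealD(2)[OF is_ideal_N] by auto
  then show ?thesis
    using assms unfolding fps_finite_mod_def by (meson finite_Un finite_subset)
qed

lemma fps_finite_mod_uminus: "fps_finite_mod N f \<Longrightarrow> fps_finite_mod N (- f)"
proof -
  have "{m. fps_nth (- f) m \<notin> N m} = {m. fps_nth f m \<notin> N m}"
    using is_ideal_uminus[OF is_ideal_N] by (auto, metis minus_minus)
  then show "fps_finite_mod N f \<Longrightarrow> fps_finite_mod N (- f)"
    by (simp add: fps_finite_mod_def)
qed

lemma fps_finite_mod_0: "fps_finite_mod N 0"
  by (simp add: fps_finite_mod_def is_idealD(1)[OF is_ideal_N])

lemma graded_abelian_group:
  fixes R :: "(nat \<Rightarrow> 'a set, 'c) ring_scheme"
  assumes carrier: "carrier R = graded_carrier A N"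
    and add: "\<And>x y. x \<oplus>\<^bsub>R\<^esub> y = (\<lambda>m. cadd (x m) (y m))"
    and zero: "\<zero>\<^bsub>R\<^esub> = N"
  shows "abelian_group R"
proof (rule abelian_groupI)
  fix x y assume "x \<in> carrier R" "y \<in> carrier R"
  then obtain f g where f: "fps_graded_in A f" "fps_finite_mod N f" "x = graded_class N f"
    and g: "fps_graded_in A g" "fps_finite_mod N g" "y = graded_class N g"
    using graded_carrierE carrier by metis
  show "x \<oplus>\<^bsub>R\<^esub> y \<in> carrier R"
    using f g by (simp add: add carrier graded_class_add graded_class_in_carrier
        fps_graded_in_add fps_finite_mod_add)
  show "x \<oplus>\<^bsub>R\<^esub> y = y \<oplus>\<^bsub>R\<^esub> x"
    using f g by (simp add: add graded_class_add add.commute)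
next
  show "\<zero>\<^bsub>R\<^esub> \<in> carrier R"
    using graded_class_in_carrier[OF fps_graded_in_0 fps_finite_mod_0]
    by (simp add: zero carrier graded_class_0)
next
  fix x y z assume "x \<in> carrier R" "y \<in> carrier R" "z \<in> carrier R"
  then obtain f g h where "x = graded_class N f" "y = graded_class N g" "z = graded_class N h"
    using graded_carrierE carrier by metis
  then show "x \<oplus>\<^bsub>R\<^esub> y \<oplus>\<^bsub>R\<^esub> z = x \<oplus>\<^bsub>R\<^esub> (y \<oplus>\<^bsub>R\<^esub> z)"
    by (simp add: add graded_class_add add.assoc)
next
  fix x assume "x \<in> carrier R"
  then obtain f where f: "fps_graded_in A f" "fps_finite_mod N f" "x = graded_class N f"
    using graded_carrierE carrier by metis
  show "\<zero>\<^bsub>R\<^esub> \<oplus>\<^bsub>R\<^esub> x = x"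
    using f graded_class_add[of 0 f] by (simp add: add zero graded_class_0)
  have "graded_class N (- f) \<oplus>\<^bsub>R\<^esub> x = \<zero>\<^bsub>R\<^esub>"
    using f graded_class_add[of "- f" f] by (simp add: add zero graded_class_0)
  moreover have "graded_class N (- f) \<in> carrier R"
    using f
    by (simp add: carrier graded_class_in_carrier fps_graded_in_uminus fps_finite_mod_uminus)
  ultimately show "\<exists>y\<in>carrier R. y \<oplus>\<^bsub>R\<^esub> x = \<zero>\<^bsub>R\<^esub>"
    by blast
qed

end

locale graded_pairing =
  Q1: graded_quotient A1 N1 + Q2: graded_quotient A2 N2 + Q3: graded_quotient A3 N3
  for A1 N1 A2 N2 A3 N3 :: "nat \<Rightarrow> 'a::comm_ring_1 set" +
  assumes mult_A_A: "\<And>i j a b. a \<in> A1 i \<Longrightarrow> b \<in> A2 j \<Longrightarrow> a * b \<in> A3 (i + j)"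
    and mult_A_N: "\<And>i j a b. a \<in> A1 i \<Longrightarrow> b \<in> N2 j \<Longrightarrow> a * b \<in> N3 (i + j)"
    and mult_N_A: "\<And>i j a b. a \<in> N1 i \<Longrightarrow> b \<in> A2 j \<Longrightarrow> a * b \<in> N3 (i + j)"
begin

lemma fps_graded_in_mult:
  assumes f: "fps_graded_in A1 f" and g: "fps_graded_in A2 g"
  shows "fps_graded_in A3 (f * g)"
  unfolding fps_graded_in_def fps_mult_nth
proof (intro allI is_ideal_sum[OF Q3.is_ideal_A])
  fix m i :: nat assume "i \<in> {0..m}"
  moreover have "fps_nth f i * fps_nth g (m - i) \<in> A3 (i + (m - i))"
    using mult_A_A f g unfolding fps_graded_in_def by blast
  ultimately show "fps_nth f i * fps_nth g (m - i) \<in> A3 m"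
    by simp
qed

lemma fps_cong_mod_mult:
  assumes "fps_graded_in A2 g" "fps_graded_in A1 f'" "fps_cong_mod N1 f f'" "fps_cong_mod N2 g g'"
  shows "fps_cong_mod N3 (f * g) (f' * g')"
  unfolding fps_cong_mod_def
proof
  fix m
  have "fps_nth (f * g) m - fps_nth (f' * g') m =
      (\<Sum>i=0..m. (fps_nth f i - fps_nth f' i) * fps_nth g (m - i)
        + fps_nth f' i * (fps_nth g (m - i) - fps_nth g' (m - i)))"
    by (simp add: fps_mult_nth sum_subtractf[symmetric] algebra_simps)
  also have "\<dots> \<in> N3 m"
  proof (rule is_ideal_sum[OF Q3.is_ideal_N])
    fix i assume "i \<in> {0..m}"
    then have "i + (m - i) = m"
      by simp
    moreover have "(fps_nth f i - fps_nth f' i) * fps_nth g (m - i) \<in> N3 (i + (m - i))"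
      using assms mult_N_A unfolding fps_graded_in_def fps_cong_mod_def by blast
    moreover have "fps_nth f' i * (fps_nth g (m - i) - fps_nth g' (m - i)) \<in> N3 (i + (m - i))"
      using assms mult_A_N unfolding fps_graded_in_def fps_cong_mod_def by blast
    ultimately show "(fps_nth f i - fps_nth f' i) * fps_nth g (m - i)
        + fps_nth f' i * (fps_nth g (m - i) - fps_nth g' (m - i)) \<in> N3 m"
      using is_idealD(2)[OF Q3.is_ideal_N] by metis
  qed
  finally show "fps_nth (f * g) m - fps_nth (f' * g') m \<in> N3 m" .
qed

lemma fps_finite_mod_mult:
  assumes "fps_graded_in A1 f" "fps_graded_in A2 g" "fps_finite_mod N1 f" "fps_finite_mod N2 g"
  shows "fps_finite_mod N3 (f * g)"
proof -
  obtain M1 where M1: "\<And>i. M1 < i \<Longrightarrow> fps_nth f i \<in> N1 i"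
    using fps_finite_modE[OF assms(3)] by blast
  obtain M2 where M2: "\<And>i. M2 < i \<Longrightarrow> fps_nth g i \<in> N2 i"
    using fps_finite_modE[OF assms(4)] by blast
  have "fps_nth (f * g) m \<in> N3 m" if m: "M1 + M2 < m" for m
    unfolding fps_mult_nth
  proof (rule is_ideal_sum[OF Q3.is_ideal_N])
    fix i assume "i \<in> {0..m}"
    then have im: "i + (m - i) = m"
      by simp
    show "fps_nth f i * fps_nth g (m - i) \<in> N3 m"
    proof (cases "M1 < i")
      case True
      then show ?thesis
        using M1 mult_N_A assms(2) im unfolding fps_graded_in_def by metis
    next
      case False
      then have "M2 < m - i"
        using m by linarith
      then show ?thesis
        using M2 mult_A_N assms(1) im unfolding fps_graded_in_def by metis
    qed
  qed
  then have "{m. fps_nth (f * g) m \<notin> N3 m} \<subseteq> {..M1 + M2}"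
    by (auto simp: not_less[symmetric])
  then show ?thesis
    unfolding fps_finite_mod_def by (meson finite_atMost finite_subset)
qed

lemma graded_mult_class:
  assumes "fps_graded_in A1 f" "fps_graded_in A2 g"
  shows "graded_mult N3 (graded_class N1 f) (graded_class N2 g) = graded_class N3 (f * g)"
proof -
  have "graded_mult N3 (graded_class N1 f) (graded_class N2 g)
      = graded_class N3 (graded_rep (graded_class N1 f) * graded_rep (graded_class N2 g))"
    by (simp add: graded_mult_def graded_class_def graded_rep_def fps_mult_nth atMost_atLeast0
        fun_eq_iff)
  also have "\<dots> = graded_class N3 (f * g)"
    unfolding Q3.graded_class_eq_iff using assms
    by (intro fps_cong_mod_mult Q1.fps_cong_mod_graded_rep Q2.fps_cong_mod_graded_rep
        Q2.fps_graded_in_graded_rep)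
  finally show ?thesis .
qed

end

locale graded_algebra = graded_quotient A N for A N :: "nat \<Rightarrow> 'a::comm_ring_1 set" +
  assumes mult_A_A: "\<And>i j a b. a \<in> A i \<Longrightarrow> b \<in> A j \<Longrightarrow> a * b \<in> A (i + j)"
    and mult_A_N: "\<And>i j a b. a \<in> A i \<Longrightarrow> b \<in> N j \<Longrightarrow> a * b \<in> N (i + j)"
    and one_in_A: "1 \<in> A 0"
begin

sublocale P: graded_pairing A N A N A N
proof
  show "a * b \<in> N (i + j)" if "a \<in> N i" "b \<in> A j" for i j a b
    using mult_A_N[OF that(2,1)] by (simp add: mult.commute add.commute)
qed (fact mult_A_A mult_A_N)+

definition graded_ring :: "(nat \<Rightarrow> 'a set) ring" where
  "graded_ring =
    \<lparr> carrier = graded_carrier A N,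
      monoid.mult = graded_mult N,
      one = (\<lambda>m. if m = 0 then pcoset (N 0) 1 else N m),
      ring.zero = N,
      ring.add = (\<lambda>x y m. cadd (x m) (y m)) \<rparr>"

lemma graded_ring_simps:
  "carrier graded_ring = graded_carrier A N"
  "x \<otimes>\<^bsub>graded_ring\<^esub> y = graded_mult N x y"
  "\<one>\<^bsub>graded_ring\<^esub> = graded_class N 1"
  "\<zero>\<^bsub>graded_ring\<^esub> = N"
  "x \<oplus>\<^bsub>graded_ring\<^esub> y = (\<lambda>m. cadd (x m) (y m))"
  by (auto simp: graded_ring_def graded_class_def fun_eq_iff)

lemma fps_graded_in_1: "fps_graded_in A 1"
  using one_in_A is_idealD(1)[OF is_ideal_A] by (auto simp: fps_graded_in_def)

lemma fps_finite_mod_1: "fps_finite_mod N 1"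
proof -
  have "{m. fps_nth (1 :: 'a fps) m \<notin> N m} \<subseteq> {0}"
    using is_idealD(1)[OF is_ideal_N] by auto
  then show ?thesis
    unfolding fps_finite_mod_def by (rule finite_subset) simp
qed

lemma comm_monoid_graded_ring: "comm_monoid graded_ring"
proof (rule comm_monoidI)
  fix x y assume "x \<in> carrier graded_ring" "y \<in> carrier graded_ring"
  then obtain f g where f: "fps_graded_in A f" "fps_finite_mod N f" "x = graded_class N f"
    and g: "fps_graded_in A g" "fps_finite_mod N g" "y = graded_class N g"
    using graded_carrierE unfolding graded_ring_simps by metis
  show "x \<otimes>\<^bsub>graded_ring\<^esub> y \<in> carrier graded_ring"
    unfolding graded_ring_simps f(3) g(3) P.graded_mult_class[OF f(1) g(1)]
    by (intro graded_class_in_carrier P.fps_graded_in_mult P.fps_finite_mod_mult f g)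
  show "x \<otimes>\<^bsub>graded_ring\<^esub> y = y \<otimes>\<^bsub>graded_ring\<^esub> x"
    unfolding graded_ring_simps f(3) g(3) P.graded_mult_class[OF f(1) g(1)]
      P.graded_mult_class[OF g(1) f(1)]
    by (simp add: mult.commute)
next
  show "\<one>\<^bsub>graded_ring\<^esub> \<in> carrier graded_ring"
    unfolding graded_ring_simps by (intro graded_class_in_carrier fps_graded_in_1 fps_finite_mod_1)
next
  fix x y z assume "x \<in> carrier graded_ring" "y \<in> carrier graded_ring" "z \<in> carrier graded_ring"
  then obtain f g h where f: "fps_graded_in A f" "x = graded_class N f"
    and g: "fps_graded_in A g" "y = graded_class N g"
    and h: "fps_graded_in A h" "z = graded_class N h"
    using graded_carrierE unfolding graded_ring_simps by metis
  show "x \<otimes>\<^bsub>graded_ring\<^esub> y \<otimes>\<^bsub>graded_ring\<^esub> z = x \<otimes>\<^bsub>graded_ring\<^esub> (y \<otimes>\<^bsub>graded_ring\<^esub> z)"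
    unfolding graded_ring_simps f(2) g(2) h(2) P.graded_mult_class[OF f(1) g(1)]
      P.graded_mult_class[OF g(1) h(1)]
      P.graded_mult_class[OF P.fps_graded_in_mult[OF f(1) g(1)] h(1)]
      P.graded_mult_class[OF f(1) P.fps_graded_in_mult[OF g(1) h(1)]]
    by (simp add: mult.assoc)
next
  fix x assume "x \<in> carrier graded_ring"
  then obtain f where f: "fps_graded_in A f" "x = graded_class N f"
    using graded_carrierE unfolding graded_ring_simps by metis
  show "\<one>\<^bsub>graded_ring\<^esub> \<otimes>\<^bsub>graded_ring\<^esub> x = x"
    unfolding graded_ring_simps f(2) P.graded_mult_class[OF fps_graded_in_1 f(1)] by simp
qed

lemma cring_graded_ring: "cring graded_ring"
proof (rule cringI)
  show "abelian_group graded_ring"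
    by (rule graded_abelian_group) (simp_all add: graded_ring_simps)
next
  fix x y z assume "x \<in> carrier graded_ring" "y \<in> carrier graded_ring" "z \<in> carrier graded_ring"
  then obtain f g h where f: "fps_graded_in A f" "x = graded_class N f"
    and g: "fps_graded_in A g" "y = graded_class N g"
    and h: "fps_graded_in A h" "z = graded_class N h"
    using graded_carrierE unfolding graded_ring_simps by metis
  show "(x \<oplus>\<^bsub>graded_ring\<^esub> y) \<otimes>\<^bsub>graded_ring\<^esub> z =
      x \<otimes>\<^bsub>graded_ring\<^esub> z \<oplus>\<^bsub>graded_ring\<^esub> y \<otimes>\<^bsub>graded_ring\<^esub> z"
    unfolding graded_ring_simps f(2) g(2) h(2) graded_class_add P.graded_mult_class[OF f(1) h(1)]
      P.graded_mult_class[OF g(1) h(1)] P.graded_mult_class[OF fps_graded_in_add[OF f(1) g(1)] h(1)]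
    by (simp add: distrib_right)
qed (rule comm_monoid_graded_ring)

end

section \<open>Fiber cone and socle\<close>

locale socle_degree_condition =
  fixes I :: "('v::finite, 'k::field) mpoly set" and d :: nat
  assumes gen: "monomial_ideal_gen_in_degree I d"
    and socle_degree: "\<And>m a. 0 < m \<Longrightarrow>
      monom a \<in> ideal_colon (ideal_pow I m) max_ideal - ideal_pow I m \<Longrightarrow>
      int (mdeg a) = int m * int d - 1"
begin

abbreviation max_prod_pow :: "nat \<Rightarrow> ('v, 'k) mpoly set" where
  "max_prod_pow \<equiv> \<lambda>m. ideal_prod max_ideal (ideal_pow I m)"

abbreviation colon_pow :: "nat \<Rightarrow> ('v, 'k) mpoly set" where
  "colon_pow \<equiv> \<lambda>m. ideal_colon (ideal_pow I m) max_ideal"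

lemma monomial_ideal_pow: "monomial_ideal (ideal_pow I m)"
  by (rule monomial_ideal_ideal_pow[OF monomial_ideal_gen_in_degree_imp_monomial[OF gen]])

lemma pow_degree_at_least: "ideal_pow I m \<subseteq> degree_at_least (m * d)"
  by (rule ideal_pow_degree_at_least[OF monomial_ideal_gen_in_degree_imp_degree_at_least[OF gen]])

lemma socle_monom_degree:
  assumes "0 < m" and "monom a \<in> colon_pow m" and "monom a \<notin> ideal_pow I m"
  shows "mdeg a + 1 = m * d"
proof -
  have "int (mdeg a + 1) = int (m * d)"
    using socle_degree assms by simp
  then show ?thesis
    by (simp only: of_nat_eq_iff)
qed

lemma in_pow_if_mult_var_in_max_prod:
  assumes h: "h \<in> colon_pow m" and hv: "h * var v \<in> max_prod_pow m"
  shows "h \<in> ideal_pow I m"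
proof (cases "m = 0")
  case False
  note mono = monomial_ideal_pow[of m]
  show ?thesis
  proof (rule ideal_mem_if_terms_mem[OF monomial_idealD(1)[OF mono]], rule ccontr)
    fix c assume c: "c \<in> Poly_Mapping.keys h" and notin: "monom c \<notin> ideal_pow I m"
    have "monom c \<in> colon_pow m"
      using monomial_idealD(2)[OF monomial_ideal_colon_max_ideal[OF mono] h c] .
    then have "mdeg c + 1 = m * d"
      using socle_monom_degree False notin by blast
    moreover have "max_prod_pow m \<subseteq> degree_at_least (1 + m * d)"
      using ideal_prod_degree_at_least[OF max_ideal_degree_at_least pow_degree_at_least] .
    then have "1 + m * d \<le> mdeg (c + Poly_Mapping.single v 1)"
      using hv keys_mult_monom[OF c] unfolding var_def degree_at_least_def by blast
    ultimately show False
      unfolding mdeg_add mdeg_single_1 by linarith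
  qed
qed simp

lemma in_max_prod_if_mult_socle_monom:
  assumes m: "0 < m" and a: "monom a \<in> colon_pow m" "monom a \<notin> ideal_pow I m"
    and f: "f \<in> ideal_pow I i" and fa: "f * monom a \<in> ideal_pow I (i + m)"
  shows "f \<in> max_prod_pow i"
proof (rule ideal_mem_if_terms_mem[OF is_ideal_ideal_prod])
  fix b assume b: "b \<in> Poly_Mapping.keys f"
  have "monom b \<in> ideal_pow I i"
    using monomial_idealD(2)[OF monomial_ideal_pow f b] .
  moreover have "i * d < mdeg b"
  proof -
    have "i * d \<le> mdeg b"
      using subsetD[OF pow_degree_at_least f] b by (simp add: degree_at_least_def)
    moreover have "(i + m) * d \<le> mdeg (b + a)"
      using subsetD[OF pow_degree_at_least fa] keys_mult_monom[OF b, of a]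
      by (simp add: degree_at_least_def)
    moreover have "mdeg a + 1 = m * d"
      using socle_monom_degree m a by blast
    ultimately show ?thesis
      unfolding mdeg_add add_mult_distrib by linarith
  qed
  ultimately show "monom b \<in> max_prod_pow i"
    by (rule ideal_pow_monom_in_max_prod[OF gen])
qed

sublocale F: graded_algebra "ideal_pow I" max_prod_pow
proof
  show "is_ideal (ideal_pow I m)" "is_ideal (max_prod_pow m)" "max_prod_pow m \<subseteq> ideal_pow I m" for m
    by (simp_all add: is_ideal_ideal_pow is_ideal_ideal_prod ideal_prod_subset_right)
  show "a * b \<in> max_prod_pow (i + j)" if "a \<in> ideal_pow I i" "b \<in> max_prod_pow j" for i j a b
    using ideal_prod_pow_mult[OF that(2,1)] by (simp add: mult.commute add.commute)
qed (simp_all add: ideal_pow_mult)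

sublocale S: graded_quotient colon_pow "ideal_pow I"
  by unfold_locales (simp_all add: is_ideal_ideal_colon is_ideal_ideal_pow ideal_subset_colon)

sublocale FS: graded_pairing
  "ideal_pow I" max_prod_pow colon_pow "ideal_pow I" colon_pow "ideal_pow I"
  by unfold_locales (simp_all add: ideal_pow_mult_colon ideal_pow_mult ideal_prod_mult_colon)

lemma fiber_cone_eq: "fiber_cone I = F.graded_ring"
  by (simp add: fiber_cone_def F.graded_ring_def Let_def)

lemma socle_module_simps:
  "carrier (socle_module I) = graded_carrier colon_pow (ideal_pow I)"
  "x \<oplus>\<^bsub>socle_module I\<^esub> y = (\<lambda>m. cadd (x m) (y m))"
  "\<zero>\<^bsub>socle_module I\<^esub> = ideal_pow I"
  "r \<odot>\<^bsub>socle_module I\<^esub> x = graded_mult (ideal_pow I) r x"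
  by (simp_all add: socle_module_def Let_def)

lemma socle_carrierE:
  assumes "x \<in> carrier (socle_module I)"
  obtains f where "fps_graded_in colon_pow f" "fps_finite_mod (ideal_pow I) f"
    "x = graded_class (ideal_pow I) f"
  using assms unfolding socle_module_simps by (rule S.graded_carrierE)

lemma fiber_cone_carrierE:
  assumes "r \<in> carrier (fiber_cone I)"
  obtains h where "fps_graded_in (ideal_pow I) h" "fps_finite_mod max_prod_pow h"
    "r = graded_class max_prod_pow h"
  using assms unfolding fiber_cone_eq F.graded_ring_simps by (rule F.graded_carrierE)

lemma socle_smult_class:
  "fps_graded_in (ideal_pow I) h \<Longrightarrow> fps_graded_in colon_pow f \<Longrightarrow>
    graded_class max_prod_pow h \<odot>\<^bsub>socle_module I\<^esub> graded_class (ideal_pow I) f =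
    graded_class (ideal_pow I) (h * f)"
  unfolding socle_module_simps by (rule FS.graded_mult_class)

text \<open>Any variable would do here.\<close>

definition mult_var :: "(nat \<Rightarrow> ('v, 'k) mpoly set) \<Rightarrow> nat \<Rightarrow> ('v, 'k) mpoly set" where
  "mult_var x = graded_class max_prod_pow (graded_rep x * fps_const (var undefined))"

lemma mult_var_class:
  assumes "fps_graded_in colon_pow f"
  shows "mult_var (graded_class (ideal_pow I) f) =
    graded_class max_prod_pow (f * fps_const (var undefined))"
  unfolding mult_var_def F.graded_class_eq_iff fps_cong_mod_def
proof
  fix m
  have "fps_nth (graded_rep (graded_class (ideal_pow I) f)) m - fps_nth f m \<in> ideal_pow I m"
    using S.fps_cong_mod_graded_rep unfolding fps_cong_mod_def by blast
  then have "var undefined * (fps_nth (graded_rep (graded_class (ideal_pow I) f)) m - fps_nth f m)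
      \<in> max_prod_pow m"
    by (rule ideal_prod_mem[OF var_in_max_ideal])
  then show "fps_nth (graded_rep (graded_class (ideal_pow I) f) * fps_const (var undefined)) m
      - fps_nth (f * fps_const (var undefined)) m \<in> max_prod_pow m"
    by (simp add: algebra_simps)
qed

lemma fps_graded_in_mult_var:
  "fps_graded_in colon_pow f \<Longrightarrow> fps_graded_in (ideal_pow I) (f * fps_const (var v))"
  unfolding fps_graded_in_def by (auto intro: ideal_colonD var_in_max_ideal)

lemma fps_finite_mod_mult_var:
  assumes "fps_finite_mod (ideal_pow I) f"
  shows "fps_finite_mod max_prod_pow (f * fps_const (var v))"
proof -
  have "fps_nth (f * fps_const (var v)) m \<in> max_prod_pow m"
    if "fps_nth f m \<in> ideal_pow I m" for m
    using ideal_prod_mem[OF var_in_max_ideal that] by (simp add: mult.commute)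
  then have "{m. fps_nth (f * fps_const (var v)) m \<notin> max_prod_pow m}
      \<subseteq> {m. fps_nth f m \<notin> ideal_pow I m}"
    by blast
  then show ?thesis
    using assms unfolding fps_finite_mod_def by (rule finite_subset)
qed

lemma inj_on_mult_var: "inj_on mult_var (carrier (socle_module I))"
proof (rule inj_onI)
  fix x y assume x: "x \<in> carrier (socle_module I)" and y: "y \<in> carrier (socle_module I)"
    and eq: "mult_var x = mult_var y"
  obtain f where f: "fps_graded_in colon_pow f" "x = graded_class (ideal_pow I) f"
    using x by (rule socle_carrierE)
  obtain g where g: "fps_graded_in colon_pow g" "y = graded_class (ideal_pow I) g"
    using y by (rule socle_carrierE)
  have "(fps_nth f m - fps_nth g m) * var undefined \<in> max_prod_pow m" for m
    using eq unfolding f g mult_var_class[OF f(1)] mult_var_class[OF g(1)] F.graded_class_eq_iff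
    by (simp add: fps_cong_mod_def left_diff_distrib)
  moreover have "fps_nth f m - fps_nth g m \<in> colon_pow m" for m
    using f(1) g(1) is_ideal_diff[OF S.is_ideal_A] by (simp add: fps_graded_in_def)
  ultimately have "fps_cong_mod (ideal_pow I) f g"
    unfolding fps_cong_mod_def using in_pow_if_mult_var_in_max_prod by blast
  then show "x = y"
    unfolding f g S.graded_class_eq_iff .
qed

lemma mult_var_add:
  assumes "x \<in> carrier (socle_module I)" and "y \<in> carrier (socle_module I)"
  shows "mult_var (x \<oplus>\<^bsub>socle_module I\<^esub> y) = mult_var x \<oplus>\<^bsub>fiber_cone I\<^esub> mult_var y"
proof -
  obtain f where f: "fps_graded_in colon_pow f" "x = graded_class (ideal_pow I) f"
    using assms(1) by (rule socle_carrierE)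
  obtain g where g: "fps_graded_in colon_pow g" "y = graded_class (ideal_pow I) g"
    using assms(2) by (rule socle_carrierE)
  show ?thesis
    unfolding fiber_cone_eq F.graded_ring_simps socle_module_simps f(2) g(2) S.graded_class_add
      mult_var_class[OF f(1)] mult_var_class[OF g(1)]
      mult_var_class[OF S.fps_graded_in_add[OF f(1) g(1)]] F.graded_class_add
    by (simp add: distrib_right)
qed

lemma mult_var_smult:
  assumes "r \<in> carrier (fiber_cone I)" and "x \<in> carrier (socle_module I)"
  shows "mult_var (r \<odot>\<^bsub>socle_module I\<^esub> x) = r \<otimes>\<^bsub>fiber_cone I\<^esub> mult_var x"
proof -
  obtain h where h: "fps_graded_in (ideal_pow I) h" "r = graded_class max_prod_pow h"
    using assms(1) by (rule fiber_cone_carrierE)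
  obtain f where f: "fps_graded_in colon_pow f" "x = graded_class (ideal_pow I) f"
    using assms(2) by (rule socle_carrierE)
  show ?thesis
    unfolding h(2) f(2) socle_smult_class[OF h(1) f(1)]
      mult_var_class[OF FS.fps_graded_in_mult[OF h(1) f(1)]]
      mult_var_class[OF f(1)] fiber_cone_eq F.graded_ring_simps
      F.P.graded_mult_class[OF h(1) fps_graded_in_mult_var[OF f(1)]]
    by (simp add: mult.assoc)
qed

lemma socle_smult_closed:
  assumes "r \<in> carrier (fiber_cone I)" and "x \<in> carrier (socle_module I)"
  shows "r \<odot>\<^bsub>socle_module I\<^esub> x \<in> carrier (socle_module I)"
proof -
  obtain h where h: "fps_graded_in (ideal_pow I) h" "fps_finite_mod max_prod_pow h"
    "r = graded_class max_prod_pow h"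
    using assms(1) by (rule fiber_cone_carrierE)
  obtain f where f: "fps_graded_in colon_pow f" "fps_finite_mod (ideal_pow I) f"
    "x = graded_class (ideal_pow I) f"
    using assms(2) by (rule socle_carrierE)
  have "r \<odot>\<^bsub>socle_module I\<^esub> x = graded_class (ideal_pow I) (h * f)"
    unfolding h(3) f(3) by (rule socle_smult_class[OF h(1) f(1)])
  then show ?thesis
    unfolding socle_module_simps(1)
    by (simp add: S.graded_class_in_carrier FS.fps_graded_in_mult FS.fps_finite_mod_mult h f)
qed

lemma mult_var_closed:
  assumes "x \<in> carrier (socle_module I)"
  shows "mult_var x \<in> carrier (fiber_cone I)"
proof -
  obtain f where f: "fps_graded_in colon_pow f" "fps_finite_mod (ideal_pow I) f"
    "x = graded_class (ideal_pow I) f"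
    using assms by (rule socle_carrierE)
  show ?thesis
    unfolding f(3) mult_var_class[OF f(1)] fiber_cone_eq F.graded_ring_simps
    by (intro F.graded_class_in_carrier fps_graded_in_mult_var fps_finite_mod_mult_var f)
qed

sublocale E: ring_embedded_module "fiber_cone I" "socle_module I" mult_var
proof (rule ring_embedded_module.intro)
  show "cring (fiber_cone I)"
    unfolding fiber_cone_eq by (rule F.cring_graded_ring)
  show "abelian_group (socle_module I)"
    by (rule S.graded_abelian_group) (simp_all add: socle_module_simps)
  show "ring_embedded_module_axioms (fiber_cone I) (socle_module I) mult_var"
    by (rule ring_embedded_module_axioms.intro)
      (simp_all add: socle_smult_closed mult_var_closed inj_on_mult_var mult_var_add mult_var_smult)
qed

lemma socle_monom_exists:
  assumes "carrier (socle_module I) \<noteq> {\<zero>\<^bsub>socle_module I\<^esub>}"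
  obtains m a where "0 < m" "monom a \<in> colon_pow m" "monom a \<notin> ideal_pow I m"
proof -
  obtain x where x: "x \<in> carrier (socle_module I)" "x \<noteq> ideal_pow I"
    using assms E.M.zero_closed unfolding socle_module_simps(3) by blast
  obtain f where f: "fps_graded_in colon_pow f" "x = graded_class (ideal_pow I) f"
    using x(1) by (rule socle_carrierE)
  have "\<not> fps_cong_mod (ideal_pow I) f 0"
    using x(2) f(2) S.graded_class_eq_iff S.graded_class_0 by metis
  then obtain m where m: "fps_nth f m \<notin> ideal_pow I m"
    by (auto simp: fps_cong_mod_def)
  note mono = monomial_ideal_pow[of m]
  obtain c where c: "c \<in> Poly_Mapping.keys (fps_nth f m)" "monom c \<notin> ideal_pow I m"
    using m ideal_mem_if_terms_mem[OF monomial_idealD(1)[OF mono]] by blast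
  have "monom c \<in> colon_pow m"
    using f(1) monomial_idealD(2)[OF monomial_ideal_colon_max_ideal[OF mono] _ c(1)]
    by (simp add: fps_graded_in_def)
  moreover have "0 < m"
    using c(2) by (cases m) auto
  ultimately show ?thesis
    using that c(2) by blast
qed

definition socle_monom :: "nat \<Rightarrow> ('v \<Rightarrow>\<^sub>0 nat) \<Rightarrow> nat \<Rightarrow> ('v, 'k) mpoly set" where
  "socle_monom m a = graded_class (ideal_pow I) (fps_const (monom a) * fps_X ^ m)"

lemma
  assumes "monom a \<in> colon_pow m"
  shows fps_graded_in_socle_monom: "fps_graded_in colon_pow (fps_const (monom a) * fps_X ^ m)"
    and socle_monom_in_carrier: "socle_monom m a \<in> carrier (socle_module I)"
proof -
  show graded: "fps_graded_in colon_pow (fps_const (monom a) * fps_X ^ m)"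
    using assms is_idealD(1)[OF S.is_ideal_A]
    by (simp add: fps_graded_in_def fps_X_power_mult_right_nth)
  have "{n. fps_nth (fps_const (monom a) * fps_X ^ m) n \<notin> ideal_pow I n} \<subseteq> {m}"
    using is_idealD(1)[OF is_ideal_ideal_pow] by (auto simp: fps_X_power_mult_right_nth)
  then have "fps_finite_mod (ideal_pow I) (fps_const (monom a) * fps_X ^ m)"
    unfolding fps_finite_mod_def by (rule finite_subset) simp
  with graded show "socle_monom m a \<in> carrier (socle_module I)"
    unfolding socle_module_simps socle_monom_def by (rule S.graded_class_in_carrier)
qed

lemma socle_monom_torsion_free:
  assumes m: "0 < m" and a: "monom a \<in> colon_pow m" "monom a \<notin> ideal_pow I m"
    and r: "r \<in> carrier (fiber_cone I)"
    and zero: "r \<odot>\<^bsub>socle_module I\<^esub> socle_monom m a = \<zero>\<^bsub>socle_module I\<^esub>"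
  shows "r = \<zero>\<^bsub>fiber_cone I\<^esub>"
proof -
  obtain h where h: "fps_graded_in (ideal_pow I) h" "r = graded_class max_prod_pow h"
    using r by (rule fiber_cone_carrierE)
  have "graded_class (ideal_pow I) (h * (fps_const (monom a) * fps_X ^ m)) =
      graded_class (ideal_pow I) 0"
    using zero unfolding h(2) socle_monom_def
      socle_smult_class[OF h(1) fps_graded_in_socle_monom[OF a(1)]]
    by (simp add: socle_module_simps S.graded_class_0)
  then have "fps_nth h i * monom a \<in> ideal_pow I (i + m)" for i
    unfolding S.graded_class_eq_iff fps_cong_mod_def
    by (metis diff_zero fps_zero_nth fps_nth_mult_const_X_power)
  then have "fps_nth h i \<in> max_prod_pow i" for i
    using in_max_prod_if_mult_socle_monom[OF m a] h(1) by (simp add: fps_graded_in_def)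
  then show ?thesis
    unfolding h(2) fiber_cone_eq F.graded_ring_simps fun_eq_iff
    by (simp add: F.graded_class_eq_self_iff)
qed

end

theorem proposition1p3:
  fixes I :: "('v::finite, 'k::field) mpoly set" and d :: nat
  assumes "monomial_ideal_gen_in_degree I d"
    and "\<forall>m::nat. m > 0 \<longrightarrow> (\<forall>a. monom a \<in> ideal_colon (ideal_pow I m) max_ideal - ideal_pow I m
            \<longrightarrow> int (mdeg a) = int m * int d - 1)"
  shows "iso_to_ideal (fiber_cone I) (socle_module I)
     \<and> (carrier (socle_module I) \<noteq> {\<zero>\<^bsub>socle_module I\<^esub>}
          \<longrightarrow> module_rank (fiber_cone I) (socle_module I) = 1)"
proof -
  interpret socle_degree_condition I d
    using assms by unfold_locales auto
  have "module_rank (fiber_cone I) (socle_module I) = 1"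
    if nonzero: "carrier (socle_module I) \<noteq> {\<zero>\<^bsub>socle_module I\<^esub>}"
  proof -
    obtain m a where "0 < m" "monom a \<in> colon_pow m" "monom a \<notin> ideal_pow I m"
      using socle_monom_exists[OF nonzero] .
    then show ?thesis
      by (intro E.module_rank_eq_1[OF socle_monom_in_carrier] socle_monom_torsion_free) auto
  qed
  then show ?thesis
    using E.iso_to_ideal by blast
qed

end
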